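(* Let $H$ be a heap, $a,a'$ addresses, $g$ a closure, and $s,s',t'$ terms. If $H[a']=(g,a)$, $g\gg_H t'$ and $\langle s,a\rangle\triangleright^H_1 s'$, then $\langle s,a'\rangle\triangleright^H_0 s'^0_{t'}$.
   Context: Terms (de Bruijn): $s::=n\mid st\mid\lambda s$. Substitution $k^k_u=u$, $n^k_u=n$ ($n\ne k$), $(st)^k_u=(s^k_u)(t^k_u)$, $(\lambda s)^k_u=\lambda(s^{k+1}_u)$. Programs are lists of commands $\mathsf{ret},\mathsf{var}\,n,\mathsf{lam},\mathsf{app}$; $\gamma n=[\mathsf{var}\,n]$, $\gamma(st)=\gamma s++\gamma t++[\mathsf{app}]$, $\gamma(\lambda s)=\mathsf{lam}::\gamma s++[\mathsf{ret}]$. $P\gg s$ iff $P=\gamma u$ and $s=\lambda u$. A closure is a pair $(P,a)$ of a program and an address $a\in\mathbb N$; a heap entry is a pair $(g,b)$ of a closure and an address; a heap $H$ is a list of entries; $H[a]$ is the $a$-th entry for $1\le a\le|H|$, undefined otherwise. Lookup: if $H[a]=(g,b)$ then $H[a,0]=g$ and $H[a,n+1]=H[b,n]$; else undefined. Unfolding $\langle s,a\rangle\triangleright^H_k s'$ is inductively defined: $\langle n,a\rangle\triangleright^H_k n$ if $n<k$; $\langle n,a\rangle\triangleright^H_k s'$ if $n\ge k$, $H[a,n-k]=(P,b)$, $P\gg u$, $\langle u,b\rangle\triangleright^H_0 s'$; $\langle\lambda s,a\rangle\triangleright^H_k\lambda s'$ if $\langle s,a\rangle\triangleright^H_{k+1}s'$;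 $\langle st,a\rangle\triangleright^H_k s't'$ if $\langle s,a\rangle\triangleright^H_k s'$ and $\langle t,a\rangle\triangleright^H_k t'$. $(P,a)\gg_H s$ iff $P\gg u$ and $\langle u,a\rangle\triangleright^H_0 s$ for some $u$. *)

theory Defs
  imports Main
begin

datatype tm = Var nat | App tm tm | Lam tm

fun subst :: "tm \<Rightarrow> nat \<Rightarrow> tm \<Rightarrow> tm" where
  "subst (Var n) k u = (if n = k then u else Var n)"
| "subst (App s t) k u = App (subst s k u) (subst t k u)"
| "subst (Lam s) k u = Lam (subst s (Suc k) u)"

datatype Com = retC | varC nat | lamC | appC

type_synonym Pro = "Com list"

fun gamma :: "tm \<Rightarrow> Pro" where
  "gamma (Var n) = [varC n]"
| "gamma (App s t) = gamma s @ gamma t @ [appC]"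
| "gamma (Lam s) = lamC # gamma s @ [retC]"

definition repsP :: "Pro \<Rightarrow> tm \<Rightarrow> bool" where
  "repsP P s \<longleftrightarrow> (\<exists>u. P = gamma u \<and> s = Lam u)"

type_synonym clo = "Pro \<times> nat"
type_synonym heapEntry = "clo \<times> nat"
type_synonym heap = "heapEntry list"

definition heapEntry :: "heap \<Rightarrow> nat \<Rightarrow> heapEntry option" where
  "heapEntry H a = (if 1 \<le> a \<and> a \<le> length H then Some (H ! (a - 1)) else None)"

fun lookup :: "heap \<Rightarrow> nat \<Rightarrow> nat \<Rightarrow> clo option" where
  "lookup H a 0 = (case heapEntry H a of Some (g, b) \<Rightarrow> Some g | None \<Rightarrow> None)"
| "lookup H a (Suc n) = (case heapEntry H a of Some (g, b) \<Rightarrow> lookup H b n | None \<Rightarrow> None)"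

inductive unfolds :: "heap \<Rightarrow> tm \<Rightarrow> nat \<Rightarrow> nat \<Rightarrow> tm \<Rightarrow> bool" where
  unfVarBound: "n < k \<Longrightarrow> unfolds H (Var n) a k (Var n)"
| unfVarFree: "n \<ge> k \<Longrightarrow> lookup H a (n - k) = Some (P, b) \<Longrightarrow> repsP P u
     \<Longrightarrow> unfolds H u b 0 s' \<Longrightarrow> unfolds H (Var n) a k s'"
| unfLam: "unfolds H s a (Suc k) s' \<Longrightarrow> unfolds H (Lam s) a k (Lam s')"
| unfApp: "unfolds H s a k s' \<Longrightarrow> unfolds H t a k t' \<Longrightarrow> unfolds H (App s t) a k (App s' t')"

definition repsClo :: "heap \<Rightarrow> clo \<Rightarrow> tm \<Rightarrow> bool" where
  "repsClo H g s \<longleftrightarrow> (\<exists>u. repsP (fst g) u \<and> unfolds H u (snd g) 0 s)"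

end

theory Submission
  imports Defs
begin

text \<open>Generalise from level 1 to level Suc k and induct on the unfolding.
  Variables below k stay bound; the variable k is looked up in the new
  entry a' and unfolds to t', which is what substituting t' for k yields;
  larger variables reach through a' the same closures they reached through
  a, and their unfoldings are untouched by the substitution because an
  unfolding at level k has no free variables at or above k.\<close>

lemma unfolds_subst_id:
  assumes "unfolds H s a k s'" and "k \<le> j"
  shows "subst s' j t = s'"
  using assms by (induction arbitrary: j rule: unfolds.induct) auto

lemma lookup_heapEntry_Suc:
  "heapEntry H a' = Some (g, a) \<Longrightarrow> lookup H a' (Suc n) = lookup H a n"
  by simp

lemma unfolds_extend_env:
  assumes "unfolds H s a (Suc k) s'"
    and "heapEntry H a' = Some (g, a)"
    and "repsClo H g t'"
  shows "unfolds H s a' k (subst s' k t')"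
  using assms
proof (induction H s a "Suc k" s' arbitrary: k rule: unfolds.induct)
  case (unfVarBound n H a)
  consider "n < k" | "n = k" using unfVarBound.hyps by linarith
  then show ?case
  proof cases
    case 1
    then show ?thesis by (simp add: unfolds.unfVarBound)
  next
    case 2
    obtain P b where g: "g = (P, b)" by (cases g)
    with unfVarBound.prems obtain u where "repsP P u" "unfolds H u b 0 t'"
      unfolding repsClo_def by auto
    moreover have "lookup H a' (n - k) = Some (P, b)"
      using 2 g unfVarBound.prems by simp
    ultimately show ?thesis
      using 2 by (simp add: unfolds.unfVarFree)
  qed
next
  case (unfVarFree n H a P b u s')
  have "n - k = Suc (n - Suc k)" using unfVarFree.hyps(1) by simp
  then have "lookup H a' (n - k) = Some (P, b)"
    using unfVarFree.hyps(2) lookup_heapEntry_Suc[OF unfVarFree.prems(1)] by simp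
  moreover have "subst s' k t' = s'"
    using unfVarFree.hyps(4) unfolds_subst_id by blast
  ultimately show ?case
    using unfVarFree.hyps by (simp add: unfolds.unfVarFree)
qed (auto intro: unfolds.intros)

theorem mainTheorem15:
  fixes H :: heap and a a' :: nat and g :: clo and s s' t' :: tm
  assumes "heapEntry H a' = Some (g, a)"
    and "repsClo H g t'"
    and "unfolds H s a 1 s'"
  shows "unfolds H s a' 0 (subst s' 0 t')"
  using unfolds_extend_env[of H s a 0 s'] assms by simp

end
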